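(* Let $\nu<0$. As a function of $\lambda\in(\nu^2,+\infty)$, $\theta_{\lambda,\nu}$ is strictly increasing, with $\lim_{\lambda\to(\nu^2)^+}\theta_{\lambda,\nu}=-\infty$ and $\lim_{\lambda\to+\infty}\theta_{\lambda,\nu}=+\infty$. Moreover, for every $\lambda>\nu^2$, $\frac{1}{2\pi}\Big(\ln(\sqrt\lambda+\nu)-\frac{2\sqrt\lambda}{\sqrt\lambda+\nu}+2\gamma\Big)\le\theta_{\lambda,\nu}\le\frac{1}{2\pi}\Big(\ln(\sqrt\lambda+\nu)-\frac{\sqrt\lambda}{\sqrt\lambda+\nu}+2\gamma\Big)$.
   Context: $\theta_{\lambda,\nu}=\frac{1}{2\pi}\big(\psi(\frac12+\frac{\nu}{2\sqrt\lambda})+2\gamma+\ln(2\sqrt\lambda)\big)$, where $\psi=\Gamma'/\Gamma$ is the digamma function and $\gamma$ the Euler–Mascheroni constant. *)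

theory Defs
  imports "HOL-Analysis.Analysis"
begin

definition theta :: "real \<Rightarrow> real \<Rightarrow> real" where
  "theta lam nu = (1 / (2 * pi)) *
     (Digamma (1/2 + nu / (2 * sqrt lam)) + 2 * euler_mascheroni + ln (2 * sqrt lam))"

end

theory Submission imports Defs "HOL-Real_Asymp.Real_Asymp" begin

text \<open>Since \<open>\<psi>(x) = lim (ln m - \<Sum>n<m. 1/(x+n))\<close>, comparing the sum with the
  integral \<open>ln (x+m) - ln x\<close> of \<open>1/t\<close> by the rectangle and the trapezoid rule gives
  \<open>ln x - 1/x \<le> \<psi>(x) \<le> ln x - 1/(2x)\<close> for \<open>x > 0\<close>. With \<open>x = (\<surd>\<lambda> + \<nu>)/(2\<surd>\<lambda>)\<close>
  these become the stated bounds on \<open>\<theta>\<close>, which also yield both limits. Monotonicity holds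
  because \<open>\<psi>\<close> and ln are increasing and, for \<open>\<nu> \<le> 0\<close>, so is \<open>\<nu>/(2\<surd>\<lambda>)\<close>.\<close>

lemma ln_succ_diff_ge:
  fixes a :: real
  assumes "0 < a"
  shows "1 / (a + 1) \<le> ln (a + 1) - ln a"
proof -
  have "ln (a / (a + 1)) \<le> a / (a + 1) - 1"
    using assms by (intro ln_le_minus_one) auto
  moreover have "ln (a / (a + 1)) = ln a - ln (a + 1)"
    using assms by (simp add: ln_div)
  moreover have "a / (a + 1) - 1 = - (1 / (a + 1))"
    using assms by (simp add: field_simps)
  ultimately show ?thesis by linarith
qed

lemma ln_one_plus_le_trapezoid:
  fixes t :: real
  assumes "0 \<le> t"
  shows "ln (1 + t) \<le> t * (2 + t) / (2 * (1 + t))"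
proof -
  let ?g = "\<lambda>t::real. t * (2 + t) / (2 * (1 + t)) - ln (1 + t)"
  have "?g 0 \<le> ?g t"
  proof (rule DERIV_nonneg_imp_nondecreasing[OF assms])
    fix x :: real
    assume "0 \<le> x" "x \<le> t"
    then have "0 < 1 + x" "2 * (1 + x) \<noteq> 0" by simp_all
    then have "(?g has_real_derivative x\<^sup>2 / (2 * (1 + x)\<^sup>2)) (at x)"
      by (intro derivative_eq_intros refl)
        (auto, simp add: divide_simps, simp add: algebra_simps power2_eq_square)
    then show "\<exists>y. (?g has_real_derivative y) (at x) \<and> 0 \<le> y"
      by auto
  qed
  then show ?thesis by simp
qed

lemma ln_succ_diff_le:
  fixes a :: real
  assumes "0 < a"
  shows "ln (a + 1) - ln a \<le> 1 / (2 * a) + 1 / (2 * (a + 1))"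
proof -
  have "ln (1 + 1 / a) \<le> (1 / a) * (2 + 1 / a) / (2 * (1 + 1 / a))"
    using assms by (intro ln_one_plus_le_trapezoid) auto
  moreover have "ln (1 + 1 / a) = ln (a + 1) - ln a"
    using assms by (simp add: field_simps ln_div)
  moreover have "(1 / a) * (2 + 1 / a) / (2 * (1 + 1 / a)) = 1 / (2 * a) + 1 / (2 * (a + 1))"
    using assms by (simp add: divide_simps) (simp add: algebra_simps)
  ultimately show ?thesis by linarith
qed

lemma sum_inverse_shift_le_ln:
  fixes x :: real
  assumes "0 < x"
  shows "(\<Sum>n<m. inverse (x + real n)) \<le> ln (x + real m) - ln x + 1 / x - 1 / (x + real m)"
proof -
  have "(\<Sum>n<m. inverse (x + real n))
      = (\<Sum>n<m. 1 / (x + real (Suc n)) + (1 / (x + real n) - 1 / (x + real (Suc n))))"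
    by (simp add: inverse_eq_divide)
  also have "\<dots> \<le> (\<Sum>n<m. (ln (x + real (Suc n)) - ln (x + real n))
                         + (1 / (x + real n) - 1 / (x + real (Suc n))))"
  proof (rule sum_mono)
    fix n :: nat
    have succ: "x + real (Suc n) = x + real n + 1"
      by simp
    show "1 / (x + real (Suc n)) + (1 / (x + real n) - 1 / (x + real (Suc n)))
        \<le> (ln (x + real (Suc n)) - ln (x + real n)) + (1 / (x + real n) - 1 / (x + real (Suc n)))"
      using ln_succ_diff_ge[of "x + real n"] assms unfolding succ by simp
  qed
  also have "\<dots> = ln (x + real m) - ln x + 1 / x - 1 / (x + real m)"
    unfolding sum.distrib sum_lessThan_telescope[of "\<lambda>n. ln (x + real n)"]
      sum_lessThan_telescope'[of "\<lambda>n. 1 / (x + real n)"]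
    by simp
  finally show ?thesis .
qed

lemma ln_le_sum_inverse_shift:
  fixes x :: real
  assumes "0 < x"
  shows "ln (x + real m) - ln x + 1 / (2 * x) - 1 / (2 * (x + real m))
           \<le> (\<Sum>n<m. inverse (x + real n))"
proof -
  have "ln (x + real m) - ln x + 1 / (2 * x) - 1 / (2 * (x + real m))
      = (\<Sum>n<m. (ln (x + real (Suc n)) - ln (x + real n))
                 + (1 / (2 * (x + real n)) - 1 / (2 * (x + real (Suc n)))))"
    unfolding sum.distrib sum_lessThan_telescope[of "\<lambda>n. ln (x + real n)"]
      sum_lessThan_telescope'[of "\<lambda>n. 1 / (2 * (x + real n))"]
    by simp
  also have "\<dots> \<le> (\<Sum>n<m. inverse (x + real n))"
  proof (rule sum_mono)
    fix n :: nat
    have "ln (x + real n + 1) - ln (x + real n) \<le> 1 / (2 * (x + real n)) + 1 / (2 * (x + real n + 1))"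
      using ln_succ_diff_le[of "x + real n"] assms by simp
    moreover have "inverse (x + real n) = 1 / (2 * (x + real n)) + 1 / (2 * (x + real n))"
      using assms by (simp add: field_simps)
    moreover have succ: "x + real (Suc n) = x + real n + 1"
      by simp
    ultimately show "(ln (x + real (Suc n)) - ln (x + real n))
                 + (1 / (2 * (x + real n)) - 1 / (2 * (x + real (Suc n)))) \<le> inverse (x + real n)"
      unfolding succ by argo
  qed
  finally show ?thesis .
qed

lemma Digamma_ge_ln_minus_inverse:
  fixes x :: real
  assumes "0 < x"
  shows "ln x - 1 / x \<le> Digamma x"
proof (rule LIMSEQ_le)
  show "(\<lambda>m. ln (real m) - ln (x + real m) + (ln x - 1 / x) + 1 / (x + real m))
          \<longlonglongrightarrow> ln x - 1 / x"
    using assms by real_asymp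
  show "(\<lambda>m. ln (real m) - (\<Sum>n<m. inverse (x + real n))) \<longlonglongrightarrow> Digamma x"
    using Digamma_LIMSEQ[of x] assms by simp
  show "\<exists>N. \<forall>m\<ge>N. ln (real m) - ln (x + real m) + (ln x - 1 / x) + 1 / (x + real m)
          \<le> ln (real m) - (\<Sum>n<m. inverse (x + real n))"
    using sum_inverse_shift_le_ln[OF assms] by (intro exI[of _ 0]) (auto simp: algebra_simps)
qed

lemma Digamma_le_ln_minus_half_inverse:
  fixes x :: real
  assumes "0 < x"
  shows "Digamma x \<le> ln x - 1 / (2 * x)"
proof (rule LIMSEQ_le)
  show "(\<lambda>m. ln (real m) - (\<Sum>n<m. inverse (x + real n))) \<longlonglongrightarrow> Digamma x"
    using Digamma_LIMSEQ[of x] assms by simp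
  show "(\<lambda>m. ln (real m) - ln (x + real m) + (ln x - 1 / (2 * x)) + 1 / (2 * (x + real m)))
          \<longlonglongrightarrow> ln x - 1 / (2 * x)"
    using assms by real_asymp
  show "\<exists>N. \<forall>m\<ge>N. ln (real m) - (\<Sum>n<m. inverse (x + real n))
          \<le> ln (real m) - ln (x + real m) + (ln x - 1 / (2 * x)) + 1 / (2 * (x + real m))"
    using ln_le_sum_inverse_shift[OF assms] by (intro exI[of _ 0] allI impI) (simp add: algebra_simps)
qed

lemma abs_less_sqrt:
  fixes x y :: real
  assumes "x\<^sup>2 < y"
  shows "\<bar>x\<bar> < sqrt y"
  using real_sqrt_less_mono[OF assms] by simp

lemma theta_eq_Digamma_shift:
  fixes lam nu :: real
  assumes "nu\<^sup>2 < lam"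
  defines "x \<equiv> (sqrt lam + nu) / (2 * sqrt lam)"
  shows "0 < x" and "theta lam nu = (Digamma x + 2 * euler_mascheroni + ln (2 * sqrt lam)) / (2 * pi)"
    and "ln (2 * sqrt lam) = ln (sqrt lam + nu) - ln x"
proof -
  have pos: "0 < sqrt lam + nu" "0 < sqrt lam"
    using abs_less_sqrt[OF assms(1)] by linarith+
  then show "0 < x"
    unfolding x_def by simp
  have "1 / 2 + nu / (2 * sqrt lam) = x"
    unfolding x_def using pos by (simp add: field_simps)
  then show "theta lam nu = (Digamma x + 2 * euler_mascheroni + ln (2 * sqrt lam)) / (2 * pi)"
    unfolding theta_def by simp
  show "ln (2 * sqrt lam) = ln (sqrt lam + nu) - ln x"
    unfolding x_def using pos by (simp add: ln_div ln_mult)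
qed

lemma theta_bounds:
  fixes lam nu :: real
  assumes "nu\<^sup>2 < lam"
  shows "(1 / (2 * pi)) * (ln (sqrt lam + nu) - 2 * sqrt lam / (sqrt lam + nu) + 2 * euler_mascheroni)
           \<le> theta lam nu"
    and "theta lam nu
           \<le> (1 / (2 * pi)) * (ln (sqrt lam + nu) - sqrt lam / (sqrt lam + nu) + 2 * euler_mascheroni)"
proof -
  define x where "x = (sqrt lam + nu) / (2 * sqrt lam)"
  note theta_x = theta_eq_Digamma_shift[OF assms, folded x_def]
  have "0 < sqrt lam" "0 < sqrt lam + nu"
    using abs_less_sqrt[OF assms] by linarith+
  then have "1 / x = 2 * sqrt lam / (sqrt lam + nu)" "1 / (2 * x) = sqrt lam / (sqrt lam + nu)"
    unfolding x_def by (simp_all add: field_simps)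
  with Digamma_ge_ln_minus_inverse[OF theta_x(1)] Digamma_le_ln_minus_half_inverse[OF theta_x(1)]
  show "(1 / (2 * pi)) * (ln (sqrt lam + nu) - 2 * sqrt lam / (sqrt lam + nu) + 2 * euler_mascheroni)
           \<le> theta lam nu"
    and "theta lam nu
           \<le> (1 / (2 * pi)) * (ln (sqrt lam + nu) - sqrt lam / (sqrt lam + nu) + 2 * euler_mascheroni)"
    unfolding theta_x(2,3) by (simp_all add: divide_right_mono)
qed

lemma theta_strict_mono:
  fixes nu :: real
  assumes "nu \<le> 0"
  shows "strict_mono_on {nu\<^sup>2<..} (\<lambda>lam. theta lam nu)"
proof (rule strict_mono_onI)
  fix r t :: real
  assume "r \<in> {nu\<^sup>2<..}" "t \<in> {nu\<^sup>2<..}" "r < t"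
  then have r: "\<bar>nu\<bar> < sqrt r" and rt: "sqrt r < sqrt t"
    using abs_less_sqrt by auto
  then have "0 < sqrt r"
    by linarith
  have "nu / (2 * sqrt r) \<le> nu / (2 * sqrt t)"
    using rt \<open>0 < sqrt r\<close> assms by (intro divide_left_mono_neg) auto
  moreover have "0 < 1 / 2 + nu / (2 * sqrt r)"
    using r \<open>0 < sqrt r\<close> by (simp add: field_simps abs_less_iff)
  ultimately have "Digamma (1 / 2 + nu / (2 * sqrt r)) \<le> Digamma (1 / 2 + nu / (2 * sqrt t))"
    by (intro Digamma_real_mono) auto
  moreover have "ln (2 * sqrt r) < ln (2 * sqrt t)"
    using rt \<open>0 < sqrt r\<close> by simp
  ultimately show "theta r nu < theta t nu"
    unfolding theta_def by (intro mult_strict_left_mono) auto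
qed

lemma theta_tendsto_at_top:
  fixes nu :: real
  shows "filterlim (\<lambda>lam. theta lam nu) at_top at_top"
proof (rule filterlim_at_top_mono)
  show "filterlim (\<lambda>lam. (1 / (2 * pi))
          * (ln (sqrt lam + nu) - 2 * sqrt lam / (sqrt lam + nu) + 2 * euler_mascheroni)) at_top at_top"
    by real_asymp
  show "\<forall>\<^sub>F lam in at_top. (1 / (2 * pi))
          * (ln (sqrt lam + nu) - 2 * sqrt lam / (sqrt lam + nu) + 2 * euler_mascheroni) \<le> theta lam nu"
    using eventually_gt_at_top[of "nu\<^sup>2"] by eventually_elim (rule theta_bounds)
qed

lemma theta_tendsto_at_right:
  fixes nu :: real
  assumes "nu < 0"
  shows "filterlim (\<lambda>lam. theta lam nu) at_bot (at_right (nu\<^sup>2))"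
proof (rule filterlim_at_bot_mono)
  have "filterlim (\<lambda>u. ln u - (u - nu) / u + 2 * euler_mascheroni) at_bot (at_right 0)"
    using assms by real_asymp
  then have upper: "filterlim (\<lambda>u. (1 / (2 * pi)) * (ln u - (u - nu) / u + 2 * euler_mascheroni))
      at_bot (at_right 0)"
    by (intro filterlim_tendsto_pos_mult_at_bot[OF tendsto_const]) simp_all
  have "((\<lambda>lam. sqrt lam + nu) \<longlongrightarrow> sqrt (nu\<^sup>2) + nu) (at_right (nu\<^sup>2))"
    by (intro tendsto_intros)
  then have "((\<lambda>lam. sqrt lam + nu) \<longlongrightarrow> 0) (at_right (nu\<^sup>2))"
    using assms by simp
  moreover have "\<forall>\<^sub>F lam in at_right (nu\<^sup>2). 0 < sqrt lam + nu"
    using eventually_at_right_less[of "nu\<^sup>2"] by eventually_elim (drule abs_less_sqrt, linarith)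
  ultimately have "filterlim (\<lambda>lam. sqrt lam + nu) (at_right 0) (at_right (nu\<^sup>2))"
    by (rule tendsto_imp_filterlim_at_right)
  from filterlim_compose[OF upper this]
  show "filterlim (\<lambda>lam. (1 / (2 * pi))
          * (ln (sqrt lam + nu) - sqrt lam / (sqrt lam + nu) + 2 * euler_mascheroni)) at_bot (at_right (nu\<^sup>2))"
    by simp
  show "\<forall>\<^sub>F lam in at_right (nu\<^sup>2). theta lam nu \<le> (1 / (2 * pi))
          * (ln (sqrt lam + nu) - sqrt lam / (sqrt lam + nu) + 2 * euler_mascheroni)"
    using eventually_at_right_less[of "nu\<^sup>2"] by eventually_elim (rule theta_bounds)
qed

theorem mainTheorem7:
  fixes nu :: real
  assumes "nu < 0"
  shows "strict_mono_on {nu\<^sup>2<..} (\<lambda>lam. theta lam nu)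
    \<and> filterlim (\<lambda>lam. theta lam nu) at_bot (at_right (nu\<^sup>2))
    \<and> filterlim (\<lambda>lam. theta lam nu) at_top at_top
    \<and> (\<forall>lam > nu\<^sup>2.
         (1 / (2 * pi)) * (ln (sqrt lam + nu) - 2 * sqrt lam / (sqrt lam + nu) + 2 * euler_mascheroni)
           \<le> theta lam nu
       \<and> theta lam nu
           \<le> (1 / (2 * pi)) * (ln (sqrt lam + nu) - sqrt lam / (sqrt lam + nu) + 2 * euler_mascheroni))"
  using assms theta_strict_mono theta_tendsto_at_right theta_tendsto_at_top theta_bounds by auto

end
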